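(* Let $\{a_j\}_{j=-\infty}^{\infty}\in\ell^2$ and $m\in\mathbb{Z}$, $m\neq 0$. Suppose that for each $j$ there is a constant $C_j$ such that $|a_{j+m}|\leq C_j|a_j|$. If, in addition, there is a $J$ such that $|a_{j+m}|\leq|a_j|$ whenever $|j|\geq J$, then $a_j=0$ for all $j$. *)

theory Defs
  imports "HOL-Analysis.Analysis"
begin

end

theory Submission
  imports Defs
begin

text \<open>Going backwards along the progression \<open>n, n - m, n - 2m, \<dots>\<close> far from the origin,
  the hypothesis \<open>|a (j + m)| \<le> |a j|\<close> makes \<open>|a|\<close> nondecreasing; as the \<open>\<ell>\<^sup>2\<close> condition forces
  \<open>|a|\<close> to tend to \<open>0\<close> along the progression, \<open>a n = 0\<close>. Every \<open>j\<close> lies forward of such an \<open>n\<close>,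
  and the constants \<open>C\<^sub>j\<close> propagate the zero forward from \<open>n\<close> to \<open>j\<close>.\<close>

lemma summable_on_comp_inj_tendsto_zero:
  fixes f :: "'a \<Rightarrow> 'b::banach"
  assumes "f summable_on A" and "inj g" and "range g \<subseteq> A"
  shows "(\<lambda>k. f (g k)) \<longlonglongrightarrow> 0"
proof -
  have "f summable_on range g"
    using assms(1,3) by (rule summable_on_subset_banach)
  then have "(f \<circ> g) summable_on UNIV"
    using assms(2) by (simp add: summable_on_reindex)
  then have "summable (f \<circ> g)"
    by (rule summable_on_imp_summable)
  then show ?thesis
    using summable_LIMSEQ_zero by (simp add: comp_def)
qed

lemma progression_inj:
  fixes n m :: int
  assumes "m \<noteq> 0"
  shows "inj (\<lambda>k::nat. n - int k * m)"
  using assms by (auto simp: inj_def)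

lemma square_summable_tendsto_zero_along_progression:
  fixes a :: "int \<Rightarrow> 'b::real_normed_vector" and n m :: int
  assumes "(\<lambda>j. (norm (a j))\<^sup>2) summable_on UNIV" and "m \<noteq> 0"
  shows "(\<lambda>k. norm (a (n - int k * m))) \<longlonglongrightarrow> 0"
proof -
  have "(\<lambda>k. (norm (a (n - int k * m)))\<^sup>2) \<longlonglongrightarrow> 0"
    using summable_on_comp_inj_tendsto_zero[OF assms(1) progression_inj[OF assms(2)]] by simp
  then have "(\<lambda>k. sqrt ((norm (a (n - int k * m)))\<^sup>2)) \<longlonglongrightarrow> sqrt 0"
    by (rule tendsto_real_sqrt)
  then show ?thesis
    by simp
qed

lemma norm_mono_backward_along_progression:
  fixes a :: "int \<Rightarrow> 'b::real_normed_vector" and n m J :: int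
  assumes decr: "\<And>j. \<bar>j\<bar> \<ge> J \<Longrightarrow> norm (a (j + m)) \<le> norm (a j)"
    and far: "\<And>k::nat. \<bar>n - int k * m\<bar> \<ge> J"
  shows "norm (a n) \<le> norm (a (n - int k * m))"
proof (induction k)
  case 0
  then show ?case by simp
next
  case (Suc k)
  have "norm (a (n - int k * m)) = norm (a ((n - int (Suc k) * m) + m))"
    by (simp add: algebra_simps)
  also have "\<dots> \<le> norm (a (n - int (Suc k) * m))"
    using decr far by blast
  finally show ?case
    using Suc.IH by linarith
qed

lemma zero_propagates_along_progression:
  fixes a :: "int \<Rightarrow> 'b::real_normed_vector" and n m :: int
  assumes bound: "\<forall>j. \<exists>C::real. norm (a (j + m)) \<le> C * norm (a j)" and "a n = 0"
  shows "a (n + int k * m) = 0"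
proof (induction k)
  case 0
  then show ?case using \<open>a n = 0\<close> by simp
next
  case (Suc k)
  obtain C where "norm (a ((n + int k * m) + m)) \<le> C * norm (a (n + int k * m))"
    using bound by blast
  with Suc.IH have "a ((n + int k * m) + m) = 0"
    by simp
  then show ?case
    by (simp add: algebra_simps)
qed

lemma progression_eventually_far:
  fixes j m J :: int
  assumes "m \<noteq> 0"
  obtains k\<^sub>0 :: nat where "\<And>k::nat. \<bar>j - int (k\<^sub>0 + k) * m\<bar> \<ge> J"
proof
  fix k :: nat
  define k\<^sub>0 where "k\<^sub>0 = nat (\<bar>j\<bar> + \<bar>J\<bar>)"
  have "int (k\<^sub>0 + k) \<le> int (k\<^sub>0 + k) * \<bar>m\<bar>"
    using assms by (simp add: mult_le_cancel_left1 int_one_le_iff_zero_less)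
  moreover have "int (k\<^sub>0 + k) * \<bar>m\<bar> - \<bar>j\<bar> \<le> \<bar>j - int (k\<^sub>0 + k) * m\<bar>"
    by (simp add: abs_mult)
  ultimately show "\<bar>j - int (k\<^sub>0 + k) * m\<bar> \<ge> J"
    unfolding k\<^sub>0_def by linarith
qed

theorem mainTheorem6:
  fixes a :: "int \<Rightarrow> complex" and m :: int
  assumes l2: "(\<lambda>j. (norm (a j))^2) summable_on UNIV"
    and m: "m \<noteq> 0"
    and C: "\<forall>j. \<exists>C::real. norm (a (j + m)) \<le> C * norm (a j)"
    and J: "\<exists>J::int. \<forall>j. \<bar>j\<bar> \<ge> J \<longrightarrow> norm (a (j + m)) \<le> norm (a j)"
  shows "\<forall>j. a j = 0"
proof
  fix j
  obtain J where decr: "\<And>j. \<bar>j\<bar> \<ge> J \<Longrightarrow> norm (a (j + m)) \<le> norm (a j)"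
    using J by blast
  obtain k\<^sub>0 where far: "\<And>k::nat. \<bar>j - int (k\<^sub>0 + k) * m\<bar> \<ge> J"
    using progression_eventually_far[OF m] by blast
  define n where "n = j - int k\<^sub>0 * m"
  have far_n: "\<bar>n - int k * m\<bar> \<ge> J" for k :: nat
    using far[of k] by (simp add: n_def algebra_simps)
  have mono: "norm (a n) \<le> norm (a (n - int k * m))" for k
    using decr far_n by (rule norm_mono_backward_along_progression)
  have "norm (a n) \<le> 0"
    using square_summable_tendsto_zero_along_progression[OF l2 m, of n]
    by (rule tendsto_lowerbound) (simp_all add: mono always_eventually)
  then have "a (n + int k\<^sub>0 * m) = 0"
    using zero_propagates_along_progression[OF C] by simp
  then show "a j = 0"
    by (simp add: n_def)
qed

end
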